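(* Let $G$ be a group with identity $e$, $A$ a set containing two distinct elements $0$ and $1$, and $S \subseteq G$ finite with $e \in S$ and $S \neq \{e\}$. Let $p \in A^S$ be given by $p(e) = 1$ and $p(s) = 0$ for $s \in S \setminus\{e\}$, and let $\tau : A^G \to A^G$ be the lazy cellular automaton with minimal local map $\mu : A^S \to A$, unique active transition $p$ and writing symbol $\mu(p) = 0$. Then for any $n\geq 2$, $\mathrm{ord}(\tau) > n$ if and only if there exists a word $(s_1, \dots, s_{n-1}) \in (S\setminus\{e\})^{n-1}$ such that $(s_j \cdots s_i)^{-1} \notin S$ for all $1 \le i \leq j \le n-1$.
   Context: $A^G$ is the set of maps $G \to A$ with shift action $(g\cdot x)(h) := x(hg)$. A cellular automaton is a map $\tau : A^G \to A^G$ with a finite $S \subseteq G$ and $\mu : A^S \to A$ such that $\tau(x)(g) = \mu((g\cdot x)|_S)$; the minimal local map is the local defining map on the neighborhood of smallest cardinality. $\tau$ is lazy with unique active transition $p \in A^S$ and writing symbol $\mu(p)$ if $e \in S$ and for all $z \in A^S$: $\mu(z) = z(e)$ iff $z \neq p$. $\tau^k$ is the $k$-fold composition, $\tau^0$ the identity; $\mathrm{ord}(\tau) := |\{\tau^k : k \in \mathbb{N}\}|$, $\mathbb{N}=\{0,1,\dots\}$. A word of length $m$ on $T \subseteq G$ is an element of $T^m$. *)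

theory Defs
  imports "HOL-Library.FuncSet" "HOL-Library.Extended_Nat"
begin

text \<open>The group G is a type of class group_add (written additively, not necessarily
  commutative): identity e = 0, product g h = g + h, inverse = uminus.
  Configurations A^G are functions 'g => 'a; patterns A^S are extensional
  functions S ->E UNIV.\<close>

definition shift :: "'g::group_add \<Rightarrow> ('g \<Rightarrow> 'a) \<Rightarrow> ('g \<Rightarrow> 'a)" where
  "shift g x = (\<lambda>h. x (h + g))"

definition is_ca_with :: "(('g::group_add \<Rightarrow> 'a) \<Rightarrow> ('g \<Rightarrow> 'a)) \<Rightarrow> 'g set \<Rightarrow> (('g \<Rightarrow> 'a) \<Rightarrow> 'a) \<Rightarrow> bool" where
  "is_ca_with \<tau> S \<mu> \<longleftrightarrow> finite S \<and> (\<forall>x g. \<tau> x g = \<mu> (restrict (shift g x) S))"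

definition is_minimal_local_map :: "(('g::group_add \<Rightarrow> 'a) \<Rightarrow> ('g \<Rightarrow> 'a)) \<Rightarrow> 'g set \<Rightarrow> (('g \<Rightarrow> 'a) \<Rightarrow> 'a) \<Rightarrow> bool" where
  "is_minimal_local_map \<tau> S \<mu> \<longleftrightarrow> is_ca_with \<tau> S \<mu> \<and>
     (\<forall>S' \<mu>'. is_ca_with \<tau> S' \<mu>' \<longrightarrow> card S \<le> card S')"

definition is_lazy_with :: "(('g::group_add \<Rightarrow> 'a) \<Rightarrow> ('g \<Rightarrow> 'a)) \<Rightarrow> 'g set \<Rightarrow> (('g \<Rightarrow> 'a) \<Rightarrow> 'a) \<Rightarrow> ('g \<Rightarrow> 'a) \<Rightarrow> bool" where
  "is_lazy_with \<tau> S \<mu> p \<longleftrightarrow> is_ca_with \<tau> S \<mu> \<and> p \<in> S \<rightarrow>\<^sub>E UNIV \<and> 0 \<in> S \<and>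
     (\<forall>z \<in> S \<rightarrow>\<^sub>E UNIV. \<mu> z = z 0 \<longleftrightarrow> z \<noteq> p)"

definition ca_order :: "('c \<Rightarrow> 'c) \<Rightarrow> enat" where
  "ca_order \<tau> = (if finite {\<tau> ^^ k | k. True} then enat (card {\<tau> ^^ k | k. True}) else \<infinity>)"

definition rprod :: "(nat \<Rightarrow> 'g::group_add) \<Rightarrow> nat \<Rightarrow> nat \<Rightarrow> 'g" where
  "rprod s i j = sum_list (rev (map s [i..<Suc j]))"

end

theory Submission
  imports Defs
begin

text \<open>The automaton erases a 1 exactly when all its neighbours s + g, s \<in> S - {0}, carry 0, and
  changes nothing else. Erasures are irreversible, so the iterates of \<tau> are pairwise distinct up to
  the first k with \<tau>^k = \<tau>^(k+1), and ord(\<tau>) > n iff \<tau>^(n-1) \<noteq> \<tau>^n.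
  A cell erased at step k + 1 has a neighbour erased at step k, and cells erased at different steps
  are never neighbours; conversely the configuration that is 1 exactly on such a chain of cells loses
  one cell per step. The differences of consecutive cells of the chain are the letters of the word.\<close>

lemma funpow_in_initial_iterates:
  fixes f :: "'a \<Rightarrow> 'a"
  assumes "f ^^ i = f ^^ j" "i < j"
  shows "f ^^ k \<in> (\<lambda>l. f ^^ l) ` {..<j}"
proof (induction k rule: less_induct)
  case (less k)
  show ?case
  proof (cases "k < j")
    case False
    then have "f ^^ k = f ^^ (k - j) \<circ> f ^^ j"
      by (simp flip: funpow_add)
    also have "\<dots> = f ^^ (k - j + i)"
      by (simp add: assms(1) funpow_add)
    finally show ?thesis
      using less.IH[of "k - j + i"] assms(2) False by simp
  qed simp
qed

lemma ca_order_gt_iff_inj_on: "ca_order f > enat n \<longleftrightarrow> inj_on (\<lambda>k. f ^^ k) {..n}"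
proof
  assume gt: "ca_order f > enat n"
  show "inj_on (\<lambda>k. f ^^ k) {..n}"
  proof (rule ccontr)
    assume "\<not> inj_on (\<lambda>k. f ^^ k) {..n}"
    then obtain i j where ij: "f ^^ i = f ^^ j" "i < j" "j \<le> n"
      unfolding inj_on_def by (metis atMost_iff linorder_neq_iff)
    have sub: "{f ^^ k | k. True} \<subseteq> (\<lambda>l. f ^^ l) ` {..<j}"
      using funpow_in_initial_iterates[OF ij(1,2)] by blast
    have "card {f ^^ k | k. True} \<le> card ((\<lambda>l. f ^^ l) ` {..<j})"
      using sub by (intro card_mono) auto
    also have "\<dots> \<le> j"
      using card_image_le[of "{..<j}" "\<lambda>l. f ^^ l"] by simp
    finally have "card {f ^^ k | k. True} \<le> j" .
    with sub gt ij(3) show False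
      by (auto simp: ca_order_def dest: finite_subset)
  qed
next
  assume inj: "inj_on (\<lambda>k. f ^^ k) {..n}"
  have sub: "(\<lambda>k. f ^^ k) ` {..n} \<subseteq> {f ^^ k | k. True}"
    by blast
  show "ca_order f > enat n"
  proof (cases "finite {f ^^ k | k. True}")
    case True
    then have "Suc n \<le> card {f ^^ k | k. True}"
      using card_mono[OF True sub] card_image[OF inj] by simp
    with True show ?thesis
      by (simp add: ca_order_def)
  qed (simp add: ca_order_def)
qed

lemma funpow_stationary:
  fixes f :: "'a \<Rightarrow> 'a"
  assumes "f ^^ Suc i = f ^^ i" "i \<le> k"
  shows "f ^^ k = f ^^ i"
  using assms(2)
proof (induction k rule: dec_induct)
  case (step l)
  then show ?case
    using assms(1) by (metis funpow.simps(2))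
qed simp

lemma rprod_self: "rprod s i i = s i"
  by (simp add: rprod_def)

lemma rprod_Suc: "i \<le> Suc j \<Longrightarrow> rprod s i (Suc j) = s (Suc j) + rprod s i j"
  by (simp add: rprod_def)

lemma rprod_telescope:
  assumes "1 \<le> i" "i \<le> j" "\<And>l. i \<le> l \<Longrightarrow> l \<le> j \<Longrightarrow> s l = d l - d (l - 1)"
  shows "rprod s i j = d j - d (i - 1)"
  using assms(2,3)
proof (induction j rule: dec_induct)
  case base
  then show ?case by (simp add: rprod_self)
next
  case (step j)
  then have "rprod s i (Suc j) = (d (Suc j) - d j) + (d j - d (i - 1))"
    by (simp add: rprod_Suc)
  also have "\<dots> = d (Suc j) - d (i - 1)"
    by (simp only: diff_conv_add_uminus add.assoc minus_add_cancel)
  finally show ?case .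
qed

text \<open>c k is to be the cell erased at step k.\<close>

definition firing_chain :: "'g::group_add set \<Rightarrow> (nat \<Rightarrow> 'g) \<Rightarrow> nat \<Rightarrow> bool" where
  "firing_chain S c m \<longleftrightarrow>
     (\<forall>k<m. c k - c (Suc k) \<in> S - {0}) \<and> (\<forall>i j. i < j \<and> j \<le> m \<longrightarrow> c j - c i \<notin> S)"

lemma word_iff_firing_chain:
  fixes S :: "'g::group_add set"
  shows "(\<exists>s :: nat \<Rightarrow> 'g. (\<forall>i \<in> {1..m}. s i \<in> S - {0}) \<and>
            (\<forall>i j. 1 \<le> i \<and> i \<le> j \<and> j \<le> m \<longrightarrow> - rprod s i j \<notin> S))
         \<longleftrightarrow> (\<exists>c. firing_chain S c m)"
proof
  assume "\<exists>s :: nat \<Rightarrow> 'g. (\<forall>i \<in> {1..m}. s i \<in> S - {0}) \<and>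
            (\<forall>i j. 1 \<le> i \<and> i \<le> j \<and> j \<le> m \<longrightarrow> - rprod s i j \<notin> S)"
  then obtain s :: "nat \<Rightarrow> 'g" where letters: "\<forall>i \<in> {1..m}. s i \<in> S - {0}"
    and factors: "\<forall>i j. 1 \<le> i \<and> i \<le> j \<and> j \<le> m \<longrightarrow> - rprod s i j \<notin> S"
    by blast
  define d where "d l = rprod s 1 l" for l
  have s_eq: "s l = d l - d (l - 1)" if "1 \<le> l" for l
    using rprod_Suc[of 1 "l - 1" s] that by (simp add: d_def eq_diff_eq)
  have rprod_eq: "rprod s i j = d j - d (i - 1)" if "1 \<le> i" "i \<le> j" for i j
    using that s_eq by (intro rprod_telescope) auto
  have "firing_chain S (\<lambda>k. d (m - k)) m"
    unfolding firing_chain_def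
  proof (intro conjI allI impI)
    fix k assume "k < m"
    then have "d (m - k) - d (m - Suc k) = s (m - k)"
      using s_eq[of "m - k"] by simp
    with \<open>k < m\<close> letters show "d (m - k) - d (m - Suc k) \<in> S - {0}"
      by simp
  next
    fix i j assume ij: "i < j \<and> j \<le> m"
    then have "Suc (m - j) \<le> m - i"
      by auto
    then have "d (m - j) - d (m - i) = - rprod s (Suc (m - j)) (m - i)"
      using rprod_eq[of "Suc (m - j)" "m - i"] by (simp add: minus_diff_eq)
    with ij factors show "d (m - j) - d (m - i) \<notin> S"
      by auto
  qed
  then show "\<exists>c. firing_chain S c m"
    by blast
next
  assume "\<exists>c. firing_chain S c m"
  then obtain c where steps: "\<forall>k<m. c k - c (Suc k) \<in> S - {0}"
    and gaps: "\<forall>i j. i < j \<and> j \<le> m \<longrightarrow> c j - c i \<notin> S"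
    unfolding firing_chain_def by blast
  define s where "s l = c (m - l) - c (m - (l - 1))" for l
  have rprod_eq: "rprod s i j = c (m - j) - c (m - (i - 1))" if "1 \<le> i" "i \<le> j" for i j
    using rprod_telescope[OF that, of s "\<lambda>l. c (m - l)"] by (simp add: s_def)
  show "\<exists>s :: nat \<Rightarrow> 'g. (\<forall>i \<in> {1..m}. s i \<in> S - {0}) \<and>
            (\<forall>i j. 1 \<le> i \<and> i \<le> j \<and> j \<le> m \<longrightarrow> - rprod s i j \<notin> S)"
  proof (intro exI[of _ s] conjI ballI allI impI)
    fix i assume "i \<in> {1..m}"
    then show "s i \<in> S - {0}"
      using steps[rule_format, of "m - i"] by (simp add: s_def Suc_diff_le)
  next
    fix i j assume ij: "1 \<le> i \<and> i \<le> j \<and> j \<le> m"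
    then have "- rprod s i j = c (m - (i - 1)) - c (m - j)"
      by (simp add: rprod_eq minus_diff_eq)
    moreover have "m - j < m - (i - 1)" "m - (i - 1) \<le> m"
      using ij by auto
    ultimately show "- rprod s i j \<notin> S"
      using gaps by simp
  qed
qed

lemma firing_chain_non_isolated:
  assumes "firing_chain S c m" "k \<le> m"
  shows "{g \<in> c ` {k..m}. \<exists>s\<in>S - {0}. s + g \<in> c ` {k..m}} = c ` {Suc k..m}"
proof -
  have steps: "\<forall>k<m. c k - c (Suc k) \<in> S - {0}"
    and gaps: "\<forall>i j. i < j \<and> j \<le> m \<longrightarrow> c j - c i \<notin> S"
    using assms(1) unfolding firing_chain_def by blast+
  have isolated: "\<not> (\<exists>s\<in>S - {0}. s + c k \<in> c ` {k..m})"
  proof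
    assume "\<exists>s\<in>S - {0}. s + c k \<in> c ` {k..m}"
    then obtain s l where "s \<in> S - {0}" "l \<in> {k..m}" "s + c k = c l"
      by blast
    moreover from this have "c l - c k = s"
      by (metis add_diff_cancel)
    ultimately show False
      using gaps by (cases "l = k") auto
  qed
  have non_isolated: "\<exists>s\<in>S - {0}. s + c j \<in> c ` {k..m}" if "j \<in> {Suc k..m}" for j
  proof
    have "j - 1 < m" "Suc (j - 1) = j"
      using that by auto
    then show "c (j - 1) - c j \<in> S - {0}"
      using steps by metis
    have "j - 1 \<in> {k..m}"
      using that by auto
    then show "c (j - 1) - c j + c j \<in> c ` {k..m}"
      by simp
  qed
  show ?thesis
  proof (intro equalityI subsetI)
    fix g assume "g \<in> {g \<in> c ` {k..m}. \<exists>s\<in>S - {0}. s + g \<in> c ` {k..m}}"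
    then obtain l where "l \<in> {k..m}" "g = c l" "\<exists>s\<in>S - {0}. s + c l \<in> c ` {k..m}"
      by blast
    moreover from this isolated have "l \<noteq> k"
      by blast
    ultimately show "g \<in> c ` {Suc k..m}"
      by auto
  next
    fix g assume "g \<in> c ` {Suc k..m}"
    with non_isolated show "g \<in> {g \<in> c ` {k..m}. \<exists>s\<in>S - {0}. s + g \<in> c ` {k..m}}"
      by auto
  qed
qed

locale isolated_eraser =
  fixes \<tau> :: "('g::group_add \<Rightarrow> 'a) \<Rightarrow> ('g \<Rightarrow> 'a)" and S :: "'g set" and a0 a1 :: 'a
  assumes symbols_distinct: "a0 \<noteq> a1"
    and eraser_rule: "\<tau> x g = (if x g = a1 \<and> (\<forall>s\<in>S - {0}. x (s + g) = a0) then a0 else x g)"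
begin

abbreviation erased_at :: "('g \<Rightarrow> 'a) \<Rightarrow> nat \<Rightarrow> 'g \<Rightarrow> bool" where
  "erased_at x k g \<equiv> (\<tau> ^^ Suc k) x g \<noteq> (\<tau> ^^ k) x g"

lemma changed_cell:
  assumes "\<tau> x g \<noteq> x g"
  shows "x g = a1" "\<tau> x g = a0" "\<forall>s\<in>S - {0}. x (s + g) = a0"
  using assms eraser_rule[of x g] by (auto split: if_splits)

lemma erased_atD:
  assumes "erased_at x k g"
  shows "(\<tau> ^^ k) x g = a1" "(\<tau> ^^ Suc k) x g = a0" "\<forall>s\<in>S - {0}. (\<tau> ^^ k) x (s + g) = a0"
  using assms changed_cell[of "(\<tau> ^^ k) x" g] by simp_all

lemma a0_persists:
  assumes "(\<tau> ^^ i) x g = a0" "i \<le> j"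
  shows "(\<tau> ^^ j) x g = a0"
  using assms(2,1)
proof (induction j rule: dec_induct)
  case (step j)
  then show ?case
    using changed_cell(2)[of "(\<tau> ^^ j) x" g] by fastforce
qed

lemma stationary_if_iterates_repeat:
  assumes "\<tau> ^^ i = \<tau> ^^ j" "i < j"
  shows "\<tau> ^^ Suc i = \<tau> ^^ i"
proof (intro ext, rule ccontr)
  fix x g assume "erased_at x i g"
  then have "(\<tau> ^^ i) x g = a1" "(\<tau> ^^ j) x g = a0"
    using erased_atD a0_persists[of "Suc i" x g j] assms(2) by auto
  with assms(1) symbols_distinct show False
    by simp
qed

lemma inj_on_iterates_iff: "inj_on (\<lambda>k. \<tau> ^^ k) {..Suc m} \<longleftrightarrow> \<tau> ^^ Suc m \<noteq> \<tau> ^^ m"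
proof
  assume "inj_on (\<lambda>k. \<tau> ^^ k) {..Suc m}"
  then show "\<tau> ^^ Suc m \<noteq> \<tau> ^^ m"
    by (metis Suc_n_not_n atMost_iff inj_on_contraD le_SucI order_refl)
next
  assume not_stationary: "\<tau> ^^ Suc m \<noteq> \<tau> ^^ m"
  show "inj_on (\<lambda>k. \<tau> ^^ k) {..Suc m}"
  proof (rule inj_onI, rule ccontr)
    fix i j assume "i \<in> {..Suc m}" "j \<in> {..Suc m}" "\<tau> ^^ i = \<tau> ^^ j" "i \<noteq> j"
    then obtain i' j' where "\<tau> ^^ i' = \<tau> ^^ j'" "i' < j'" "j' \<le> Suc m"
      by (metis atMost_iff linorder_neq_iff)
    then have "\<tau> ^^ Suc i' = \<tau> ^^ i'" "i' \<le> m"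
      using stationary_if_iterates_repeat by auto
    then have "\<tau> ^^ Suc m = \<tau> ^^ m"
      using funpow_stationary by (metis le_SucI)
    with not_stationary show False ..
  qed
qed

lemma erased_at_predecessor:
  assumes "erased_at x (Suc k) h"
  obtains t where "t \<in> S - {0}" "erased_at x k (t + h)"
proof -
  define y where "y = (\<tau> ^^ k) x"
  have next_y: "(\<tau> ^^ Suc k) x = \<tau> y"
    by (simp add: y_def)
  have "\<tau> y h = a1" "\<forall>s\<in>S - {0}. \<tau> y (s + h) = a0"
    using erased_atD[OF assms] by (simp_all add: y_def)
  moreover from this have "y h = a1"
    using changed_cell(2)[of y h] symbols_distinct by fastforce
  ultimately have "\<not> (\<forall>s\<in>S - {0}. y (s + h) = a0)"
    using symbols_distinct by (auto simp: eraser_rule[of y h] split: if_split_asm)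
  then obtain t where "t \<in> S - {0}" "y (t + h) \<noteq> a0" "\<tau> y (t + h) = a0"
    using \<open>\<forall>s\<in>S - {0}. \<tau> y (s + h) = a0\<close> by blast
  then show thesis
    using that next_y y_def by auto
qed

lemma erased_cells_apart:
  assumes "erased_at x i g" "erased_at x j g'" "i < j"
  shows "g' - g \<notin> S"
proof
  assume "g' - g \<in> S"
  have "(\<tau> ^^ Suc i) x g' = a0"
  proof (cases "g' = g")
    case False
    with \<open>g' - g \<in> S\<close> have "g' - g \<in> S - {0}"
      by simp
    then have "(\<tau> ^^ i) x ((g' - g) + g) = a0"
      using erased_atD(3)[OF assms(1)] by blast
    then show ?thesis
      using a0_persists[of i x g' "Suc i"] by simp
  qed (use erased_atD(2)[OF assms(1)] in simp)
  then have "(\<tau> ^^ j) x g' = a0"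
    using a0_persists[of "Suc i" x g' j] assms(3) by simp
  with erased_atD(1)[OF assms(2)] symbols_distinct show False
    by simp
qed

lemma erased_at_imp_backward_chain:
  "erased_at x m h \<Longrightarrow> \<exists>c. c m = h \<and> (\<forall>k<m. c k - c (Suc k) \<in> S - {0}) \<and> (\<forall>k\<le>m. erased_at x k (c k))"
proof (induction m arbitrary: h)
  case 0
  then show ?case
    by (intro exI[of _ "\<lambda>_. h"]) auto
next
  case (Suc m)
  obtain t where t: "t \<in> S - {0}" "erased_at x m (t + h)"
    using erased_at_predecessor[OF Suc.prems] by blast
  from Suc.IH[OF t(2)] obtain c where c: "c m = t + h" "\<forall>k<m. c k - c (Suc k) \<in> S - {0}"
    "\<forall>k\<le>m. erased_at x k (c k)"
    by blast
  show ?case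
  proof (intro exI[of _ "c(Suc m := h)"] conjI allI impI)
    fix k assume "k < Suc m"
    with c t show "(c(Suc m := h)) k - (c(Suc m := h)) (Suc k) \<in> S - {0}"
      by (cases "k = m") auto
  next
    fix k assume "k \<le> Suc m"
    with c Suc.prems show "erased_at x k ((c(Suc m := h)) k)"
      by (cases "k = Suc m") auto
  qed simp
qed

lemma erased_at_imp_firing_chain:
  assumes "erased_at x m h"
  shows "\<exists>c. firing_chain S c m"
proof -
  obtain c where steps: "\<forall>k<m. c k - c (Suc k) \<in> S - {0}"
    and erased: "\<forall>k\<le>m. erased_at x k (c k)"
    using erased_at_imp_backward_chain[OF assms] by blast
  have "c j - c i \<notin> S" if "i < j" "j \<le> m" for i j
    using erased_cells_apart[where x = x and i = i and g = "c i" and j = j and g' = "c j"] erased that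
    by simp
  with steps have "firing_chain S c m"
    unfolding firing_chain_def by blast
  then show ?thesis
    by blast
qed

lemma eraser_indicator:
  "\<tau> (\<lambda>g. if g \<in> X then a1 else a0) = (\<lambda>g. if g \<in> X \<and> (\<exists>s\<in>S - {0}. s + g \<in> X) then a1 else a0)"
  using symbols_distinct by (auto simp: eraser_rule)

lemma firing_chain_imp_not_stationary:
  assumes "firing_chain S c m"
  shows "\<tau> ^^ Suc m \<noteq> \<tau> ^^ m"
proof -
  define config :: "'g set \<Rightarrow> 'g \<Rightarrow> 'a" where "config X = (\<lambda>g. if g \<in> X then a1 else a0)" for X
  have iterate: "(\<tau> ^^ k) (config (c ` {0..m})) = config (c ` {k..m})" if "k \<le> Suc m" for k
    using that
  proof (induction k)
    case (Suc k)
    then have "(\<tau> ^^ Suc k) (config (c ` {0..m})) = \<tau> (config (c ` {k..m}))"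
      by simp
    also have "\<dots> = config {g \<in> c ` {k..m}. \<exists>s\<in>S - {0}. s + g \<in> c ` {k..m}}"
      by (simp add: config_def eraser_indicator)
    also have "\<dots> = config (c ` {Suc k..m})"
      using firing_chain_non_isolated[OF assms, of k] Suc.prems by simp
    finally show ?case .
  qed simp
  have "(\<tau> ^^ m) (config (c ` {0..m})) (c m) = a1" "(\<tau> ^^ Suc m) (config (c ` {0..m})) (c m) = a0"
    by (simp_all only: iterate order.refl le_SucI) (simp_all add: config_def)
  with symbols_distinct show ?thesis
    by metis
qed

lemma not_stationary_iff_firing_chain: "\<tau> ^^ Suc m \<noteq> \<tau> ^^ m \<longleftrightarrow> (\<exists>c. firing_chain S c m)"
proof
  assume "\<tau> ^^ Suc m \<noteq> \<tau> ^^ m"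
  then obtain x h where "erased_at x m h"
    by (meson ext)
  then show "\<exists>c. firing_chain S c m"
    by (rule erased_at_imp_firing_chain)
qed (use firing_chain_imp_not_stationary in blast)

end

lemma lazy_isolated_eraser:
  fixes \<tau> :: "('g::group_add \<Rightarrow> 'a) \<Rightarrow> ('g \<Rightarrow> 'a)"
  assumes "a0 \<noteq> a1"
    and lazy: "is_lazy_with \<tau> S \<mu> p"
    and p_def: "p = restrict (\<lambda>s. if s = 0 then a1 else a0) S"
    and "\<mu> p = a0"
  shows "isolated_eraser \<tau> S a0 a1"
proof
  fix x :: "'g \<Rightarrow> 'a" and g :: 'g
  define z where "z = restrict (shift g x) S"
  have "\<tau> x g = \<mu> z" "0 \<in> S" "z \<in> S \<rightarrow>\<^sub>E UNIV"
    using lazy unfolding is_lazy_with_def is_ca_with_def z_def by auto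
  have active_iff: "z = p \<longleftrightarrow> x g = a1 \<and> (\<forall>s\<in>S - {0}. x (s + g) = a0)"
  proof
    assume "z = p"
    have pattern: "x (s + g) = (if s = 0 then a1 else a0)" if "s \<in> S" for s
    proof -
      have "z s = p s"
        using \<open>z = p\<close> by simp
      with that show ?thesis
        by (simp add: z_def p_def shift_def)
    qed
    have "x g = a1"
      using pattern[OF \<open>0 \<in> S\<close>] by simp
    moreover have "\<forall>s\<in>S - {0}. x (s + g) = a0"
      using pattern by simp
    ultimately show "x g = a1 \<and> (\<forall>s\<in>S - {0}. x (s + g) = a0)" ..
  next
    assume "x g = a1 \<and> (\<forall>s\<in>S - {0}. x (s + g) = a0)"
    then show "z = p"
      unfolding z_def p_def shift_def by (intro restrict_ext) auto
  qed
  show "\<tau> x g = (if x g = a1 \<and> (\<forall>s\<in>S - {0}. x (s + g) = a0) then a0 else x g)"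
  proof (cases "z = p")
    case False
    then have "\<mu> z = z 0"
      using lazy \<open>z \<in> S \<rightarrow>\<^sub>E UNIV\<close> unfolding is_lazy_with_def by blast
    with \<open>\<tau> x g = \<mu> z\<close> \<open>0 \<in> S\<close> have "\<tau> x g = x g"
      by (simp add: z_def shift_def)
    moreover have "\<not> (x g = a1 \<and> (\<forall>s\<in>S - {0}. x (s + g) = a0))"
      using False active_iff by blast
    ultimately show ?thesis
      by auto
  qed (use active_iff \<open>\<tau> x g = \<mu> z\<close> \<open>\<mu> p = a0\<close> in simp)
qed (fact \<open>a0 \<noteq> a1\<close>)

theorem proposition4:
  fixes \<tau> :: "('g::group_add \<Rightarrow> 'a) \<Rightarrow> ('g \<Rightarrow> 'a)"
    and S :: "'g set" and \<mu> :: "('g \<Rightarrow> 'a) \<Rightarrow> 'a" and p :: "'g \<Rightarrow> 'a"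
    and a0 a1 :: 'a and n :: nat
  assumes "a0 \<noteq> a1"
    and "finite S" and "0 \<in> S" and "S \<noteq> {0}"
    and "p = restrict (\<lambda>s. if s = 0 then a1 else a0) S"
    and "is_minimal_local_map \<tau> S \<mu>"
    and "is_lazy_with \<tau> S \<mu> p"
    and "\<mu> p = a0"
    and "n \<ge> 2"
  shows "ca_order \<tau> > enat n \<longleftrightarrow>
    (\<exists>s :: nat \<Rightarrow> 'g. (\<forall>i \<in> {1..n-1}. s i \<in> S - {0}) \<and>
       (\<forall>i j. 1 \<le> i \<and> i \<le> j \<and> j \<le> n - 1 \<longrightarrow> - rprod s i j \<notin> S))"
proof -
  interpret isolated_eraser \<tau> S a0 a1
    by (rule lazy_isolated_eraser[OF assms(1,7,5,8)])
  obtain m where n: "n = Suc m"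
    using \<open>n \<ge> 2\<close> by (cases n) auto
  have "ca_order \<tau> > enat n \<longleftrightarrow> \<tau> ^^ Suc m \<noteq> \<tau> ^^ m"
    by (simp only: n ca_order_gt_iff_inj_on inj_on_iterates_iff)
  also have "\<dots> \<longleftrightarrow> (\<exists>c. firing_chain S c m)"
    by (rule not_stationary_iff_firing_chain)
  also have "\<dots> \<longleftrightarrow> (\<exists>s :: nat \<Rightarrow> 'g. (\<forall>i \<in> {1..m}. s i \<in> S - {0}) \<and>
       (\<forall>i j. 1 \<le> i \<and> i \<le> j \<and> j \<le> m \<longrightarrow> - rprod s i j \<notin> S))"
    by (rule word_iff_firing_chain[symmetric])
  finally show ?thesis
    by (simp add: n)
qed

end
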